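(* Fix $m\ge1$, integers $t,s\ge0$, and $N\ge0$; set $n:=|\xi|-2N$ and assume $n\ge0$. (a) Let $\xi=(m^t,1^s)$ and write $s-2N=qm+\rho$ with $q\in\mathbb Z$, $0\le\rho<m$. Then $V^{\xi\to m}_{tm+s-2N}(1)=[x^N]\,p_{m-\rho-1}(x)/p_m(x)^{q+1}$. If $q<0$ this equals $0$. If $q\ge0$ it equals the number of tuples $(P_0,\dots,P_q)$ with $P_0\in\mathcal D_m(0,m-\rho-1;u_0)$, $P_\nu\in\mathcal D_m(0,0;u_\nu)$ ($1\le\nu\le q$), and $u_0+\cdots+u_q=N$. (b) Let $\xi=(m^t,r,1^s)$ with $1\le r\le m-1$, and write $r+s-2N=qm+\rho$, $q\in\mathbb Z$, $0\le\rho<m$. Then $V^{\xi\to m}_{tm+r+s-2N}(1)=[x^N]\,p_r(x)p_{m-\rho-1}(x)/p_m(x)^{q+1}$. If $q<0$ this equals $0$. If $q=0$ and $2N\le s$, it equals $D_m(r,m-r-s+2N-1;N)$. If $q\ge1$, it equals the number of tuples $(P_0,\dots,P_q)$ with $P_0\in\mathcal D_m(0,m-\rho-1;u_0)$, $P_1\in\mathcal D_m(r,0;u_1)$, $P_\nu\in\mathcal D_m(0,0;u_\nu)$ ($2\le\nu\le q$), and $u_0+\cdots+u_q=N$. (c) Let $\xi=(m^t,r_1,\dots,r_d,1^s)$ with $1\le r_i\le m-1$, and write $r_1+\cdots+r_d+s-2N=qm+\rho$, $q\in\mathbb Z$, $0\le\rho<m$. Then $V^{\xi\to m}_{tm+r_1+\cdots+r_d+s-2N}(1)=[x^N]\,p_{m-\rho-1}(x)\prod_{i=1}^dp_{r_i}(x)/p_m(x)^{q+1}$.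 If $q<0$ this equals $0$. If $q\ge d$, it equals the number of tuples $(P_0,\dots,P_q)$ with $P_0\in\mathcal D_m(0,m-\rho-1;u_0)$, $P_i\in\mathcal D_m(r_i,0;u_i)$ ($1\le i\le d$), $P_\nu\in\mathcal D_m(0,0;u_\nu)$ ($d+1\le\nu\le q$), and $u_0+\cdots+u_q=N$.
   Context: $p_0=p_1=1$, $p_{r+1}(x)=p_r(x)-xp_{r-1}(x)$ ($r\ge1$); $p_\xi=\prod_ip_{\xi_i}$; $|\xi|$ is the sum of parts; $m^t$ denotes $t$ parts equal to $m$, with parts arranged in nonincreasing order. For a power series $f=\sum c_rx^r$, $[x^j]f=c_j$ if $j\ge0$ and $0$ otherwise; negative powers $p_m^{-(q+1)}$ with $q+1\le 0$ mean the polynomial $p_m^{|q+1|}$. Numerical Demazure multiplicities: for a partition $\xi$ with parts $\le m$ and $n\ge0$, $V^{\xi\to m}_n(1)$ is the number of level-$m$ Demazure modules $D(m,n)$ (over all grade shifts) in a Demazure flag of the $\mathfrak{sl}_2[t]$ fusion product $V(\xi)$; take as given the known formula: writing $n=n_1m+n_0$ with $0\le n_0<m$, $V^{\xi\to m}_n(1)=[x^{(|\xi|-n)/2}]\,p_{m-n_0-1}(x)p_\xi(x)/p_m(x)^{n_1+1}$ (zero if $(|\xi|-n)/2$ is not a nonnegative integer). Dyck paths: lattice paths from $(0,0)$ with steps $(1,1)$ (up) and $(1,-1)$ (down), ending on and never going below the $x$-axis; semilength = half the number of steps; height = maximal $y$-coordinate. For $0\le a,b\le m-1$ with $a+b\le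 m-1$ and $u\ge0$, $\mathcal D_m(a,b;u)$ is the set of Dyck paths of height $\le m-1$ and semilength $m-1-b+u$ whose first $a$ steps are up-steps and last $m-1-b$ steps are down-steps; $D_m(a,b;u)=\#\mathcal D_m(a,b;u)$. *)

theory Defs
  imports "HOL-Computational_Algebra.Computational_Algebra"
begin

fun pp :: "nat \<Rightarrow> rat poly" where
  "pp 0 = 1"
| "pp (Suc 0) = 1"
| "pp (Suc (Suc r)) = pp (Suc r) - [:0, 1:] * pp r"

definition Pf :: "nat \<Rightarrow> rat fps" where
  "Pf r = fps_of_poly (pp r)"

definition Pxi :: "nat list \<Rightarrow> rat fps" where
  "Pxi xi = prod_list (map Pf xi)"

definition Pminv :: "nat \<Rightarrow> int \<Rightarrow> rat fps" where
  "Pminv m q = (if q + 1 \<ge> 0 then inverse (Pf m) ^ nat (q + 1)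
               else Pf m ^ nat (- (q + 1)))"

text \<open>Numerical Demazure multiplicity V^{xi -> m}_n(1), via the given formula.\<close>
definition V :: "nat list \<Rightarrow> nat \<Rightarrow> nat \<Rightarrow> rat" where
  "V xi m n = (let n0 = n mod m; n1 = n div m; w = sum_list xi in
     if n \<le> w \<and> even (w - n)
     then fps_nth (Pf (m - n0 - 1) * Pxi xi * inverse (Pf m) ^ (n1 + 1)) ((w - n) div 2)
     else 0)"

text \<open>Lattice paths as lists of steps: True = up-step (1,1), False = down-step (1,-1).\<close>
definition level :: "bool list \<Rightarrow> int" where
  "level xs = sum_list (map (\<lambda>b. if b then 1 else -1) xs)"

definition is_dyck :: "bool list \<Rightarrow> bool" where
  "is_dyck xs \<longleftrightarrow> (\<forall>k \<le> length xs. level (take k xs) \<ge> 0) \<and> level xs = 0"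

definition height :: "bool list \<Rightarrow> int" where
  "height xs = Max {level (take k xs) | k. k \<le> length xs}"

definition Dset :: "nat \<Rightarrow> nat \<Rightarrow> nat \<Rightarrow> nat \<Rightarrow> bool list set" where
  "Dset m a b u = {P. is_dyck P \<and> height P \<le> int m - 1
       \<and> length P = 2 * (m - 1 - b + u)
       \<and> take a P = replicate a True
       \<and> drop (length P - (m - 1 - b)) P = replicate (m - 1 - b) False}"

definition Dnum :: "nat \<Rightarrow> nat \<Rightarrow> nat \<Rightarrow> nat \<Rightarrow> nat" where
  "Dnum m a b u = card (Dset m a b u)"

definition tuples :: "nat \<Rightarrow> (nat \<times> nat) list \<Rightarrow> nat \<Rightarrow> bool list list set" where
  "tuples m ab N = {Ps. length Ps = length ab \<and>
      (\<exists>us. length us = length ab \<and> sum_list us = N \<and>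
         (\<forall>i < length ab. Ps ! i \<in> Dset m (fst (ab ! i)) (snd (ab ! i)) (us ! i)))}"

end

theory Submission
  imports Defs
begin

(* Transfer-matrix counting. The generating function, by number of down-steps, of walks from
  height i to height c that stay in the strip [0, h] is p_i p_(h-c) / p_(h+1) for i <= c and
  x^(i-c) p_c p_(h-i) / p_(h+1) for i > c: both sides satisfy the same first-step recursion,
  which for the right-hand side reduces to the three-term recurrence and the addition formula
  p_(a+b+2) = p_(a+1) p_(b+1) - x p_a p_b. A path in D_m(a,b;u) is a forced run of a up-steps,
  a walk from a to m-1-b in the strip [0, m-1] with u down-steps, and a forced run of m-1-b
  down-steps, so sum_u D_m(a,b;u) x^u = p_a p_b / p_m. Counting tuples multiplies these series,
  giving p_(m-rho-1) prod_i p_(r_i) / p_m^(q+1), and the formula for V reduces to the same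
  coefficient once p_m^t is cancelled against the parts equal to m. For q < 0 that product is a
  polynomial of degree less than N. *)

section \<open>The polynomials p_r\<close>

lemma Pf_0 [simp]: "Pf 0 = 1"
  by (simp add: Pf_def)

lemma Pf_1 [simp]: "Pf (Suc 0) = 1"
  by (simp add: Pf_def)

lemma Pf_Suc_Suc: "Pf (Suc (Suc r)) = Pf (Suc r) - fps_X * Pf r"
  by (simp add: Pf_def fps_of_poly_diff fps_of_poly_mult)

lemma fps_nth_Pf_0 [simp]: "Pf r $ 0 = 1"
  by (induction r rule: pp.induct) (simp_all add: Pf_Suc_Suc)

lemma Pf_eq_Pf_Suc_add: "Pf i = Pf (Suc i) + (if 0 < i then fps_X * Pf (i - 1) else 0)"
  by (cases i) (simp_all add: Pf_Suc_Suc)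

lemma Pf_add: "Pf (a + b + 2) = Pf (a + 1) * Pf (b + 1) - fps_X * Pf a * Pf b"
proof (induction b rule: pp.induct)
  case 1
  show ?case using Pf_Suc_Suc[of a] by simp
next
  case 2
  have p2: "Pf (Suc 0 + 1) = 1 - fps_X"
    using Pf_Suc_Suc[of 0] by simp
  have p3: "Pf (a + Suc 0 + 2) = Pf (a + 1) - fps_X * Pf a - fps_X * Pf (a + 1)"
    using Pf_Suc_Suc[of "Suc a"] Pf_Suc_Suc[of a] by simp
  show ?case unfolding p2 p3 by (simp add: algebra_simps)
next
  case (3 r)
  have "Pf (a + Suc (Suc r) + 2) = Pf (a + Suc r + 2) - fps_X * Pf (a + r + 2)"
    using Pf_Suc_Suc[of "a + r + 2"] by simp
  moreover have "Pf (Suc (Suc r) + 1) = Pf (Suc r + 1) - fps_X * Pf (r + 1)"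
    using Pf_Suc_Suc[of "Suc r"] by simp
  moreover have "Pf (Suc (Suc r)) = Pf (Suc r) - fps_X * Pf r"
    by (rule Pf_Suc_Suc)
  ultimately show ?case
    unfolding 3 by (simp only:) (simp add: algebra_simps)
qed

lemma Pf_mult_Pf:
  "Pf c * Pf d = Pf (c + d + 1) + (if 0 < d then fps_X * Pf c * Pf (d - 1) else 0)
                 + (if 0 < c then fps_X * Pf (c - 1) * Pf d else 0)"
proof (cases "c = 0 \<or> d = 0")
  case True
  then show ?thesis
    using Pf_eq_Pf_Suc_add[of c] Pf_eq_Pf_Suc_add[of d] by auto
next
  case False
  then obtain a b where ab: "c = Suc a" "d = Suc b"
    by (metis not0_implies_Suc)
  have "Pf (Suc (Suc (Suc (a + b)))) = Pf (a + 1) * Pf (b + 1) - fps_X * Pf a * Pf (b + 1)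
                                        - fps_X * Pf (a + 1) * Pf b"
    using Pf_add[of "a + 1" b] Pf_Suc_Suc[of a] by (simp add: algebra_simps)
  then show ?thesis using ab by (simp add: algebra_simps)
qed

lemma degree_pp_le: "2 * degree (pp r) \<le> r"
proof (induction r rule: pp.induct)
  case (3 r)
  have "degree (pp (Suc (Suc r))) \<le> max (degree (pp (Suc r))) (degree ([:0, 1:] * pp r))"
    by (metis degree_diff_le_max pp.simps(3))
  moreover have "degree ([:0, 1::rat:] * pp r) \<le> 1 + degree (pp r)"
    using degree_mult_le[of "[:0, 1::rat:]" "pp r"] by simp
  ultimately show ?case using 3 by linarith
qed auto

lemma degree_prod_pp_le: "2 * degree (prod_list (map pp xs)) \<le> sum_list xs"
proof (induction xs)
  case (Cons x xs)
  then show ?case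
    using degree_mult_le[of "pp x" "prod_list (map pp xs)"] degree_pp_le[of x] by simp
qed simp

lemma Pxi_nth_eq_0:
  assumes "sum_list xs < 2 * N"
  shows "Pxi xs $ N = 0"
proof -
  have "Pxi xs = fps_of_poly (prod_list (map pp xs))"
    unfolding Pxi_def by (induction xs) (simp_all add: Pf_def fps_of_poly_mult)
  then show ?thesis
    using degree_prod_pp_le[of xs] assms by (simp add: coeff_eq_0)
qed

section \<open>Walks in a strip\<close>

lemma level_Nil [simp]: "level [] = 0"
  by (simp add: level_def)

lemma level_Cons [simp]: "level (b # w) = (if b then 1 else -1) + level w"
  by (simp add: level_def)

lemma level_append [simp]: "level (u @ v) = level u + level v"
  by (simp add: level_def)

lemma level_replicate_True [simp]: "level (replicate a True) = int a"
  by (induction a) auto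

lemma level_replicate_False [simp]: "level (replicate a False) = - int a"
  by (induction a) auto

lemma level_add_down_steps: "level w + 2 * int (length (filter Not w)) = int (length w)"
  by (induction w) auto

fun walk_in_strip :: "int \<Rightarrow> int \<Rightarrow> bool list \<Rightarrow> bool" where
  "walk_in_strip h i [] = True"
| "walk_in_strip h i (b # w) \<longleftrightarrow>
     0 \<le> i + level [b] \<and> i + level [b] \<le> h \<and> walk_in_strip h (i + level [b]) w"

lemma walk_in_strip_append:
  "walk_in_strip h i (u @ v) \<longleftrightarrow> walk_in_strip h i u \<and> walk_in_strip h (i + level u) v"
  by (induction u arbitrary: i) (auto simp: algebra_simps)

lemma walk_in_strip_replicate_True:
  "0 \<le> i \<Longrightarrow> i + int a \<le> h \<Longrightarrow> walk_in_strip h i (replicate a True)"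
  by (induction a arbitrary: i) auto

lemma walk_in_strip_replicate_False:
  "0 \<le> i - int a \<Longrightarrow> i \<le> h \<Longrightarrow> walk_in_strip h i (replicate a False)"
  by (induction a arbitrary: i) auto

lemma walk_in_strip_iff_prefixes:
  assumes "0 \<le> i" "i \<le> h"
  shows "walk_in_strip h i w \<longleftrightarrow>
           (\<forall>k \<le> length w. 0 \<le> i + level (take k w) \<and> i + level (take k w) \<le> h)"
  using assms
proof (induction w arbitrary: i)
  case (Cons b w)
  have split_first:
    "(\<forall>k \<le> length (b # w). P k) \<longleftrightarrow> P 0 \<and> (\<forall>k \<le> length w. P (Suc k))" for P
    by (simp add: All_less_Suc2 flip: less_Suc_eq_le)
  show ?case
  proof (cases "0 \<le> i + level [b] \<and> i + level [b] \<le> h")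
    case True
    then show ?thesis
      using Cons.IH[of "i + level [b]"] Cons.prems by (simp only: split_first) (simp add: algebra_simps)
  next
    case False
    then show ?thesis
      by (simp only: split_first walk_in_strip.simps) auto
  qed
qed simp

lemma dyck_height_le_iff:
  assumes "0 \<le> h"
  shows "is_dyck P \<and> height P \<le> h \<longleftrightarrow> walk_in_strip h 0 P \<and> level P = 0"
proof -
  have "{level (take k P) | k. k \<le> length P} = (\<lambda>k. level (take k P)) ` {..length P}"
    by auto
  then have "height P \<le> h \<longleftrightarrow> (\<forall>k \<le> length P. level (take k P) \<le> h)"
    unfolding height_def by (subst Max_le_iff) auto
  then show ?thesis
    unfolding is_dyck_def using walk_in_strip_iff_prefixes[of 0 h P] assms by auto
qed

definition strip_walks :: "nat \<Rightarrow> nat \<Rightarrow> nat \<Rightarrow> nat \<Rightarrow> bool list set" where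
  "strip_walks h i c n =
     {w. walk_in_strip (int h) (int i) w \<and> int i + level w = int c \<and> length (filter Not w) = n}"

lemma finite_strip_walks: "finite (strip_walks h i c n)"
proof (rule finite_subset)
  show "strip_walks h i c n \<subseteq> {w. set w \<subseteq> UNIV \<and> length w \<le> c + 2 * n}"
  proof
    fix w assume "w \<in> strip_walks h i c n"
    then show "w \<in> {w. set w \<subseteq> UNIV \<and> length w \<le> c + 2 * n}"
      using level_add_down_steps[of w] by (auto simp: strip_walks_def)
  qed
qed (rule finite_lists_length_le; simp)

lemma strip_walks_first_step:
  assumes "i \<le> h"
  shows "strip_walks h i c n =
           (if i = c \<and> n = 0 then {[]} else {})
         \<union> (if i < h then (#) True ` strip_walks h (Suc i) c n else {})
         \<union> (if 0 < i \<and> 0 < n then (#) False ` strip_walks h (i - 1) c (n - 1) else {})"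
    (is "_ = ?rhs")
proof (intro set_eqI iffI)
  fix w assume w: "w \<in> strip_walks h i c n"
  show "w \<in> ?rhs"
  proof (cases w)
    case Nil
    then show ?thesis using w by (auto simp: strip_walks_def)
  next
    case (Cons b v)
    show ?thesis
    proof (cases b)
      case True
      then have "i < h" "v \<in> strip_walks h (Suc i) c n"
        using w Cons by (auto simp: strip_walks_def algebra_simps)
      then show ?thesis using Cons True by auto
    next
      case False
      then have "0 < i" "0 < n" "v \<in> strip_walks h (i - 1) c (n - 1)"
        using w Cons by (auto simp: strip_walks_def algebra_simps of_nat_diff)
      then show ?thesis using Cons False by auto
    qed
  qed
next
  fix w assume "w \<in> ?rhs"
  then show "w \<in> strip_walks h i c n"
    using assms by (auto simp: strip_walks_def algebra_simps of_nat_diff split: if_splits)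
qed

lemma card_strip_walks_first_step:
  assumes "i \<le> h"
  shows "card (strip_walks h i c n) =
           (if i = c \<and> n = 0 then 1 else 0)
         + (if i < h then card (strip_walks h (Suc i) c n) else 0)
         + (if 0 < i \<and> 0 < n then card (strip_walks h (i - 1) c (n - 1)) else 0)"
proof -
  let ?A = "if i = c \<and> n = 0 then {[]} else {} :: bool list set"
  let ?B = "if i < h then (#) True ` strip_walks h (Suc i) c n else {}"
  let ?C = "if 0 < i \<and> 0 < n then (#) False ` strip_walks h (i - 1) c (n - 1) else {}"
  have fin: "finite ?A" "finite ?B" "finite ?C"
    by (simp_all add: finite_strip_walks)
  have "card (strip_walks h i c n) = card (?A \<union> ?B) + card ?C"
    unfolding strip_walks_first_step[OF assms] by (rule card_Un_disjoint) (use fin in auto)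
  also have "card (?A \<union> ?B) = card ?A + card ?B"
    by (rule card_Un_disjoint) (use fin in auto)
  also have "card ?B = (if i < h then card (strip_walks h (Suc i) c n) else 0)"
    by (simp add: card_image)
  also have "card ?C = (if 0 < i \<and> 0 < n then card (strip_walks h (i - 1) c (n - 1)) else 0)"
    by (simp add: card_image)
  finally show ?thesis
    by simp
qed

(* strip_num h c i is the (i, c) entry of the adjugate of the tridiagonal matrix 1 - U - x D on
  heights 0..h (U and D the up and down shifts), whose determinant is p_(h+1). *)
definition strip_num :: "nat \<Rightarrow> nat \<Rightarrow> nat \<Rightarrow> rat fps" where
  "strip_num h c i = (if i \<le> c then Pf i * Pf (h - c) else fps_X ^ (i - c) * Pf c * Pf (h - i))"

lemma strip_num_first_step:
  assumes "i \<le> h" "c \<le> h"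
  shows "strip_num h c i = (if i = c then Pf (Suc h) else 0)
                           + (if i < h then strip_num h c (Suc i) else 0)
                           + (if 0 < i then fps_X * strip_num h c (i - 1) else 0)"
proof -
  consider "i < c" | "i = c" | "c < i"
    by linarith
  then show ?thesis
  proof cases
    case 1
    then show ?thesis
      using assms Pf_eq_Pf_Suc_add[of i] by (auto simp: strip_num_def algebra_simps)
  next
    case 2
    then show ?thesis
      using assms Pf_mult_Pf[of c "h - c"]
      by (auto simp: strip_num_def algebra_simps Suc_diff_Suc)
  next
    case 3
    have "fps_X * strip_num h c (i - 1) = fps_X ^ (i - c) * Pf c * Pf (Suc (h - i))"
      using 3 assms by (cases "i - 1 = c") (auto simp: strip_num_def Suc_diff_le power_eq_if)
    then show ?thesis
      using 3 assms Pf_eq_Pf_Suc_add[of "h - i"]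
      by (auto simp: strip_num_def algebra_simps Suc_diff_Suc Suc_diff_le)
  qed
qed

definition strip_gf :: "nat \<Rightarrow> nat \<Rightarrow> nat \<Rightarrow> rat fps" where
  "strip_gf h c i = strip_num h c i * inverse (Pf (Suc h))"

lemma strip_gf_nth_first_step:
  assumes "i \<le> h" "c \<le> h"
  shows "strip_gf h c i $ n = (if i = c \<and> n = 0 then 1 else 0)
                             + (if i < h then strip_gf h c (Suc i) $ n else 0)
                             + (if 0 < i \<and> 0 < n then strip_gf h c (i - 1) $ (n - 1) else 0)"
proof -
  have "Pf (Suc h) * inverse (Pf (Suc h)) = 1"
    by (rule inverse_mult_eq_1') simp
  then have "strip_gf h c i = (if i = c then 1 else 0)
                              + (if i < h then strip_gf h c (Suc i) else 0)
                              + (if 0 < i then fps_X * strip_gf h c (i - 1) else 0)"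
    unfolding strip_gf_def by (subst strip_num_first_step[OF assms]) (simp add: algebra_simps)
  then show ?thesis
    by (cases n) auto
qed

lemma card_strip_walks:
  assumes "i \<le> h" "c \<le> h"
  shows "of_nat (card (strip_walks h i c n)) = strip_gf h c i $ n"
  using assms(1)
proof (induction n arbitrary: i rule: less_induct)
  case (less n)
  note IH_fewer_down_steps = less.IH
  from less.prems show ?case
  proof (induction i rule: inc_induct)
    case base
    then show ?case
      unfolding card_strip_walks_first_step[OF order_refl]
        strip_gf_nth_first_step[OF order_refl assms(2)]
      using IH_fewer_down_steps[of "n - 1" "h - 1"] by simp
  next
    case (step i)
    then show ?case
      unfolding card_strip_walks_first_step[OF less_imp_le[OF step.hyps(2)]]
        strip_gf_nth_first_step[OF less_imp_le[OF step.hyps(2)] assms(2)]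
      using IH_fewer_down_steps[of "n - 1" "i - 1"] step.IH by simp
  qed
qed

section \<open>Dyck paths with forced ends\<close>

lemma length_Dset: "P \<in> Dset m a b u \<Longrightarrow> length P = 2 * (m - 1 - b + u)"
  by (simp add: Dset_def)

lemma finite_Dset: "finite (Dset m a b u)"
proof (rule finite_subset)
  show "Dset m a b u \<subseteq> {w. set w \<subseteq> UNIV \<and> length w \<le> 2 * (m - 1 - b + u)}"
    by (auto simp: Dset_def)
qed (rule finite_lists_length_le; simp)

lemma Dset_imp_framed_walk:
  assumes m: "1 \<le> m" and ab: "a + b \<le> m - 1" and P: "P \<in> Dset m a b u"
  shows "\<exists>w \<in> strip_walks (m - 1) a (m - 1 - b) u.
           P = replicate a True @ w @ replicate (m - 1 - b) False"
proof -
  define c where "c = m - 1 - b"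
  have L: "length P = 2 * (c + u)"
    using P by (simp add: Dset_def c_def)
  have ac: "a \<le> c"
    using ab by (simp add: c_def)
  have prefix: "take a P = replicate a True" and suffix: "drop (length P - c) P = replicate c False"
    using P by (auto simp: Dset_def c_def)
  have dyck: "walk_in_strip (int (m - 1)) 0 P" "level P = 0"
    using P dyck_height_le_iff[of "int (m - 1)" P] m by (auto simp: Dset_def)
  define w where "w = take (length P - a - c) (drop a P)"
  have "drop (length P - a - c) (drop a P) = drop (length P - c) P"
    using ac L by (simp add: drop_drop)
  then have P_eq: "P = replicate a True @ w @ replicate c False"
    unfolding w_def by (metis append_take_drop_id prefix suffix)
  have "w \<in> strip_walks (m - 1) a c u"
    using dyck level_add_down_steps[of P] L P_eq
    by (simp add: strip_walks_def walk_in_strip_append filter_replicate)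
  then show ?thesis
    using P_eq by (auto simp: c_def)
qed

lemma framed_walk_in_Dset:
  assumes m: "1 \<le> m" and ab: "a + b \<le> m - 1" and w: "w \<in> strip_walks (m - 1) a (m - 1 - b) u"
  shows "replicate a True @ w @ replicate (m - 1 - b) False \<in> Dset m a b u"
proof -
  define c where "c = m - 1 - b"
  define P where "P = replicate a True @ w @ replicate c False"
  have ac: "a \<le> c" "c \<le> m - 1"
    using ab by (auto simp: c_def)
  have walk: "walk_in_strip (int (m - 1)) (int a) w" and lev: "int a + level w = int c"
    and down: "length (filter Not w) = u"
    using w by (auto simp: strip_walks_def c_def)
  have "int (length w) = int c - int a + 2 * int u"
    using level_add_down_steps[of w] lev down by simp
  then have "length P = 2 * (m - 1 - b + u)"
    using ac unfolding P_def c_def[symmetric] by simp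
  moreover have "is_dyck P \<and> height P \<le> int m - 1"
    using dyck_height_le_iff[of "int (m - 1)" P] walk lev ac m
    unfolding P_def
    by (simp add: walk_in_strip_append walk_in_strip_replicate_True walk_in_strip_replicate_False
        of_nat_diff)
  moreover have "drop (length P - c) P = replicate c False"
    by (simp add: P_def)
  ultimately show ?thesis
    by (simp add: Dset_def P_def c_def)
qed

lemma Dset_eq_image:
  assumes "1 \<le> m" "a + b \<le> m - 1"
  shows "Dset m a b u = (\<lambda>w. replicate a True @ w @ replicate (m - 1 - b) False)
                          ` strip_walks (m - 1) a (m - 1 - b) u"
  using Dset_imp_framed_walk[OF assms] framed_walk_in_Dset[OF assms] by blast

definition dyck_gf :: "nat \<Rightarrow> nat \<Rightarrow> nat \<Rightarrow> rat fps" where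
  "dyck_gf m a b = Abs_fps (\<lambda>u. of_nat (Dnum m a b u))"

theorem dyck_gf_eq:
  assumes "1 \<le> m" "a + b \<le> m - 1"
  shows "dyck_gf m a b = Pf a * Pf b * inverse (Pf m)"
proof (rule fps_ext)
  fix u
  have "card (Dset m a b u) = card (strip_walks (m - 1) a (m - 1 - b) u)"
    unfolding Dset_eq_image[OF assms] by (rule card_image) (auto simp: inj_on_def)
  then have "dyck_gf m a b $ u = strip_gf (m - 1) (m - 1 - b) a $ u"
    using card_strip_walks[of a "m - 1" "m - 1 - b" u] assms by (simp add: dyck_gf_def Dnum_def)
  also have "strip_gf (m - 1) (m - 1 - b) a = Pf a * Pf b * inverse (Pf m)"
  proof -
    have "a \<le> m - 1 - b" "m - 1 - (m - 1 - b) = b" "Suc (m - 1) = m"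
      using assms by auto
    then show ?thesis
      by (simp add: strip_gf_def strip_num_def)
  qed
  finally show "dyck_gf m a b $ u = (Pf a * Pf b * inverse (Pf m)) $ u" .
qed

section \<open>Tuples of Dyck paths\<close>

lemma tuples_Nil: "tuples m [] N = (if N = 0 then {[]} else {})"
  by (auto simp: tuples_def)

lemma tuples_Cons:
  "tuples m ((a, b) # shapes) N =
     (\<Union>u \<in> {..N}. (\<lambda>(P, Ps). P # Ps) ` (Dset m a b u \<times> tuples m shapes (N - u)))"
  (is "_ = ?rhs")
proof (intro set_eqI iffI)
  fix Ps assume "Ps \<in> tuples m ((a, b) # shapes) N"
  then obtain us where len: "length Ps = Suc (length shapes)" "length us = Suc (length shapes)"
    and sum: "sum_list us = N"
    and mem: "\<forall>i < Suc (length shapes). Ps ! i \<in> Dset m (fst (((a, b) # shapes) ! i))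
                                                    (snd (((a, b) # shapes) ! i)) (us ! i)"
    by (auto simp: tuples_def)
  obtain P Ps' u us' where Ps: "Ps = P # Ps'" and us: "us = u # us'"
    using len by (cases Ps; cases us) auto
  have "Ps' \<in> tuples m shapes (N - u)"
    using len sum mem unfolding Ps us tuples_def All_less_Suc2
    by (intro CollectI conjI exI[of _ us']) auto
  moreover have "P \<in> Dset m a b u" "u \<le> N"
    using mem sum unfolding Ps us All_less_Suc2 by auto
  ultimately show "Ps \<in> ?rhs"
    unfolding Ps by force
next
  fix Ps assume "Ps \<in> ?rhs"
  then obtain u P Ps' us' where u: "u \<le> N" and Ps: "Ps = P # Ps'" and P: "P \<in> Dset m a b u"
    and len: "length Ps' = length shapes" "length us' = length shapes" and sum: "sum_list us' = N - u"
    and mem: "\<forall>i < length shapes. Ps' ! i \<in> Dset m (fst (shapes ! i)) (snd (shapes ! i)) (us' ! i)"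
    by (auto simp: tuples_def)
  show "Ps \<in> tuples m ((a, b) # shapes) N"
    unfolding tuples_def Ps
    by (intro CollectI conjI exI[of _ "u # us'"])
      (use u P len sum mem in \<open>auto simp: All_less_Suc2\<close>)
qed

lemma card_tuples:
  "finite (tuples m shapes N)
   \<and> of_nat (card (tuples m shapes N)) = prod_list (map (\<lambda>(a, b). dyck_gf m a b) shapes) $ N"
proof (induction shapes arbitrary: N)
  case Nil
  then show ?case by (simp add: tuples_Nil)
next
  case (Cons ab shapes)
  obtain a b where ab: "ab = (a, b)"
    by force
  let ?A = "\<lambda>u. (\<lambda>(P, Ps). P # Ps) ` (Dset m a b u \<times> tuples m shapes (N - u))"
  have fin: "finite (?A u)" for u
    using Cons.IH finite_Dset by auto
  have disj: "?A u \<inter> ?A v = {}" if "u \<noteq> v" for u v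
    \<comment> \<open>the length of the first path determines u\<close>
    using that by (auto dest!: length_Dset)
  have card_A: "card (?A u) = card (Dset m a b u) * card (tuples m shapes (N - u))" for u
    by (subst card_image) (auto simp: inj_on_def card_cartesian_product)
  have "card (tuples m (ab # shapes) N) = (\<Sum>u \<le> N. card (?A u))"
    unfolding tuples_Cons ab by (rule card_UN_disjoint) (use fin disj in auto)
  then have "of_nat (card (tuples m (ab # shapes) N)) =
               (\<Sum>u = 0..N. dyck_gf m a b $ u
                              * prod_list (map (\<lambda>(a, b). dyck_gf m a b) shapes) $ (N - u))"
    using Cons.IH by (simp add: card_A dyck_gf_def Dnum_def atLeast0AtMost)
  moreover have "finite (tuples m (ab # shapes) N)"
    unfolding tuples_Cons ab using fin by auto
  ultimately show ?case
    by (simp add: ab fps_mult_nth)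
qed

section \<open>Demazure multiplicities\<close>

lemma Pxi_replicate_append:
  "Pxi (replicate t m @ rs @ replicate s 1) = Pf m ^ t * prod_list (map Pf rs)"
  by (simp add: Pxi_def prod_list_replicate)

lemma Pf_power_mult_inverse_power:
  assumes "0 \<le> int t + q"
  shows "Pf m ^ t * inverse (Pf m) ^ (nat (int t + q) + 1) = Pminv m q"
proof -
  have inv: "Pf m ^ k * inverse (Pf m) ^ k = 1" for k
    by (simp add: inverse_mult_eq_1' flip: power_mult_distrib)
  show ?thesis
  proof (cases "0 \<le> q + 1")
    case True
    then have "nat (int t + q) + 1 = t + nat (q + 1)"
      using assms by linarith
    then have "Pf m ^ t * inverse (Pf m) ^ (nat (int t + q) + 1)
               = (Pf m ^ t * inverse (Pf m) ^ t) * inverse (Pf m) ^ nat (q + 1)"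
      by (simp only: power_add mult.assoc)
    then show ?thesis
      using True by (simp add: inv Pminv_def)
  next
    case False
    define K where "K = nat (int t + q) + 1"
    define J where "J = nat (- (q + 1))"
    have "t = K + J"
      using assms False by (simp add: K_def J_def)
    then have "Pf m ^ t * inverse (Pf m) ^ K = (Pf m ^ K * inverse (Pf m) ^ K) * Pf m ^ J"
      by (simp add: power_add ac_simps)
    also have "\<dots> = Pminv m q"
      using False by (simp add: inv Pminv_def J_def)
    finally show ?thesis
      by (simp only: K_def)
  qed
qed

lemma V_eq_coeff:
  assumes m: "1 \<le> m" and rho: "\<rho> < m"
    and div: "int (sum_list rs) + int s - 2 * int N = q * int m + int \<rho>"
    and n: "2 * N \<le> t * m + sum_list rs + s"
  shows "V (replicate t m @ rs @ replicate s 1) m (t * m + sum_list rs + s - 2 * N)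
         = (Pf (m - \<rho> - 1) * prod_list (map Pf rs) * Pminv m q) $ N"
proof -
  define n where "n = t * m + sum_list rs + s - 2 * N"
  have n_int: "int n = (int t + q) * int m + int \<rho>"
    using n div by (simp add: n_def of_nat_diff algebra_simps)
  have "0 < (int t + q + 1) * int m"
    using n_int rho by (simp add: algebra_simps)
  then have tq: "0 \<le> int t + q"
    using m by (simp add: zero_less_mult_iff)
  then have "int n = int (nat (int t + q) * m + \<rho>)"
    using n_int by simp
  then have "n = nat (int t + q) * m + \<rho>"
    by (simp only: of_nat_eq_iff)
  then have "n div m = nat (int t + q)" "n mod m = \<rho>"
    using rho by auto
  moreover define xi where "xi = replicate t m @ rs @ replicate s 1"
  have "sum_list xi = t * m + sum_list rs + s"
    by (simp add: xi_def sum_list_replicate)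
  then have "n \<le> sum_list xi \<and> even (sum_list xi - n)" "(sum_list xi - n) div 2 = N"
    using n by (simp_all add: n_def)
  ultimately have "V xi m n
      = (Pf (m - \<rho> - 1) * Pxi xi * inverse (Pf m) ^ (nat (int t + q) + 1)) $ N"
    unfolding V_def Let_def by (simp only: simp_thms if_True)
  also have "\<dots> = (Pf (m - \<rho> - 1) * prod_list (map Pf rs)
                     * (Pf m ^ t * inverse (Pf m) ^ (nat (int t + q) + 1))) $ N"
    unfolding xi_def Pxi_replicate_append by (simp only: ac_simps)
  finally show ?thesis
    unfolding Pf_power_mult_inverse_power[OF tq] n_def xi_def .
qed

lemma coeff_Pminv_eq_0:
  assumes q: "q < 0" and rho: "\<rho> < m"
    and div: "int (sum_list rs) + int s - 2 * int N = q * int m + int \<rho>"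
  shows "(Pf (m - \<rho> - 1) * prod_list (map Pf rs) * Pminv m q) $ N = 0"
proof -
  define k where "k = nat (- (q + 1))"
  have "Pf (m - \<rho> - 1) * prod_list (map Pf rs) * Pminv m q
        = Pxi ((m - \<rho> - 1) # rs @ replicate k m)"
    using q by (simp add: Pxi_def Pminv_def k_def prod_list_replicate)
  moreover have "sum_list ((m - \<rho> - 1) # rs @ replicate k m) < 2 * N"
  proof -
    have qk: "q = - int k - 1"
      using q by (simp add: k_def)
    have "int (sum_list rs) + int s - 2 * int N = - int k * int m - int m + int \<rho>"
      using div[unfolded qk] by (simp add: algebra_simps)
    then have "int (sum_list ((m - \<rho> - 1) # rs @ replicate k m)) = 2 * int N - int s - 1"
      using rho by (simp add: sum_list_replicate of_nat_diff algebra_simps)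
    then show ?thesis
      by linarith
  qed
  ultimately show ?thesis
    by (simp add: Pxi_nth_eq_0)
qed

lemma prod_dyck_gf:
  assumes "1 \<le> m" "\<forall>(a, b) \<in> set shapes. a + b \<le> m - 1"
  shows "prod_list (map (\<lambda>(a, b). dyck_gf m a b) shapes)
         = prod_list (map (\<lambda>(a, b). Pf a * Pf b) shapes) * inverse (Pf m) ^ length shapes"
  using assms(2) by (induction shapes) (auto simp: dyck_gf_eq[OF assms(1)] ac_simps)

lemma card_tuples_eq_coeff:
  assumes m: "1 \<le> m" and rs: "\<forall>r \<in> set rs. r \<le> m - 1"
    and q: "int (length rs) \<le> q" and rho: "\<rho> < m"
  shows "of_nat (card (tuples m ((0, m - \<rho> - 1) # map (\<lambda>r. (r, 0)) rs
                                 @ replicate (nat q - length rs) (0, 0)) N))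
         = (Pf (m - \<rho> - 1) * prod_list (map Pf rs) * Pminv m q) $ N"
proof -
  have "nat (q + 1) = 1 + length rs + (nat q - length rs)"
    using q by linarith
  then have "Pminv m q = inverse (Pf m) ^ (1 + length rs + (nat q - length rs))"
    using q by (simp add: Pminv_def)
  moreover
  let ?shapes = "(0, m - \<rho> - 1) # map (\<lambda>r. (r, 0)) rs @ replicate (nat q - length rs) (0, 0)"
  have "prod_list (map (\<lambda>(a, b). dyck_gf m a b) ?shapes)
        = prod_list (map (\<lambda>(a, b). Pf a * Pf b) ?shapes) * inverse (Pf m) ^ length ?shapes"
    by (rule prod_dyck_gf[OF m]) (use rs rho in auto)
  ultimately show ?thesis
    using card_tuples[of m ?shapes N] by (simp add: prod_list_replicate o_def power_add ac_simps)
qed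

lemma V_general_case:
  fixes rs :: "nat list"
  assumes m: "1 \<le> m" and rs: "\<forall>r \<in> set rs. r \<le> m - 1"
    and n: "0 \<le> int (t * m + sum_list rs + s) - 2 * int N"
  defines "z \<equiv> int (sum_list rs) + int s - 2 * int N"
    and "v \<equiv> V (replicate t m @ rs @ replicate s 1) m (nat (int (t * m + sum_list rs + s) - 2 * int N))"
  shows "v = (Pf (m - nat (z mod int m) - 1) * prod_list (map Pf rs) * Pminv m (z div int m)) $ N"
    and "z div int m < 0 \<Longrightarrow> v = 0"
    and "int (length rs) \<le> z div int m \<Longrightarrow>
         v = of_nat (card (tuples m ((0, m - nat (z mod int m) - 1) # map (\<lambda>r. (r, 0)) rs
                                     @ replicate (nat (z div int m) - length rs) (0, 0)) N))"
proof -
  define q where "q = z div int m"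
  define \<rho> where "\<rho> = nat (z mod int m)"
  have rho: "\<rho> < m"
    using m by (simp add: \<rho>_def nat_less_iff)
  have div: "int (sum_list rs) + int s - 2 * int N = q * int m + int \<rho>"
    using m by (simp add: q_def \<rho>_def z_def)
  have "nat (int W - 2 * int N) = W - 2 * N" for W
    by simp
  moreover have "2 * N \<le> t * m + sum_list rs + s"
    using n by linarith
  ultimately have v: "v = (Pf (m - \<rho> - 1) * prod_list (map Pf rs) * Pminv m q) $ N"
    unfolding v_def using V_eq_coeff[OF m rho div] by presburger
  then show "v = (Pf (m - nat (z mod int m) - 1) * prod_list (map Pf rs) * Pminv m (z div int m)) $ N"
    by (simp add: q_def \<rho>_def)
  show "z div int m < 0 \<Longrightarrow> v = 0"
    using v coeff_Pminv_eq_0[OF _ rho div] by (simp add: q_def)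
  show "int (length rs) \<le> z div int m \<Longrightarrow>
        v = of_nat (card (tuples m ((0, m - nat (z mod int m) - 1) # map (\<lambda>r. (r, 0)) rs
                                    @ replicate (nat (z div int m) - length rs) (0, 0)) N))"
    using v card_tuples_eq_coeff[OF m rs _ rho] by (simp add: q_def \<rho>_def)
qed

lemma V_one_part_eq_Dnum:
  assumes m: "1 \<le> m" and q: "(int r + int s - 2 * int N) div int m = 0" and sN: "2 * N \<le> s"
  shows "V (replicate t m @ [r] @ replicate s 1) m (nat (int (t * m + r + s) - 2 * int N))
         = of_nat (Dnum m r (nat (int m - int r - int s + 2 * int N - 1)) N)"
proof -
  have nat_eq: "nat (int W - 2 * int N) = W - 2 * N" for W
    by simp
  define \<rho> where "\<rho> = r + s - 2 * N"
  have rho_int: "int \<rho> = int r + int s - 2 * int N"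
    using sN by (simp add: \<rho>_def)
  have "int (\<rho> div m) = 0"
    using q sN by (simp add: \<rho>_def zdiv_int of_nat_diff)
  then have rho: "\<rho> < m"
    using m by (simp add: div_eq_0_iff)
  define b where "b = m - \<rho> - 1"
  have b: "nat (int m - int r - int s + 2 * int N - 1) = b" "r + b \<le> m - 1"
    using rho sN by (auto simp: b_def \<rho>_def)
  have "V (replicate t m @ [r] @ replicate s 1) m (t * m + sum_list [r] + s - 2 * N)
        = (Pf b * prod_list (map Pf [r]) * Pminv m 0) $ N"
    unfolding b_def by (rule V_eq_coeff[OF m rho]) (use rho_int sN in simp_all)
  then have "V (replicate t m @ [r] @ replicate s 1) m (nat (int (t * m + r + s) - 2 * int N))
             = (Pf r * Pf b * inverse (Pf m)) $ N"
    unfolding nat_eq by (simp add: Pminv_def ac_simps)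
  also have "\<dots> = of_nat (Dnum m r b N)"
    unfolding dyck_gf_eq[OF m b(2), symmetric] by (simp add: dyck_gf_def)
  finally show ?thesis
    by (simp only: b(1))
qed

theorem corollary1p4:
  fixes m t s N :: nat
  assumes "m \<ge> 1"
  shows
  "(let xi = replicate t m @ replicate s 1;
        n = int (t * m + s) - 2 * int N;
        q = (int s - 2 * int N) div int m;
        \<rho> = nat ((int s - 2 * int N) mod int m)
    in n \<ge> 0 \<longrightarrow>
       V xi m (nat n) = fps_nth (Pf (m - \<rho> - 1) * Pminv m q) N
     \<and> (q < 0 \<longrightarrow> V xi m (nat n) = 0)
     \<and> (q \<ge> 0 \<longrightarrow> V xi m (nat n) =
           of_nat (card (tuples m ((0, m - \<rho> - 1) # replicate (nat q) (0, 0)) N))))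
 \<and> (\<forall>r. 1 \<le> r \<and> r \<le> m - 1 \<longrightarrow>
    (let xi = replicate t m @ [r] @ replicate s 1;
         n = int (t * m + r + s) - 2 * int N;
         q = (int r + int s - 2 * int N) div int m;
         \<rho> = nat ((int r + int s - 2 * int N) mod int m)
     in n \<ge> 0 \<longrightarrow>
        V xi m (nat n) = fps_nth (Pf r * Pf (m - \<rho> - 1) * Pminv m q) N
      \<and> (q < 0 \<longrightarrow> V xi m (nat n) = 0)
      \<and> (q = 0 \<and> 2 * N \<le> s \<longrightarrow> V xi m (nat n) =
            of_nat (Dnum m r (nat (int m - int r - int s + 2 * int N - 1)) N))
      \<and> (q \<ge> 1 \<longrightarrow> V xi m (nat n) =
            of_nat (card (tuples m ((0, m - \<rho> - 1) # (r, 0) # replicate (nat q - 1) (0, 0)) N)))))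
 \<and> (\<forall>rs :: nat list. (\<forall>r \<in> set rs. 1 \<le> r \<and> r \<le> m - 1) \<and> sorted_wrt (\<ge>) rs \<longrightarrow>
    (let d = length rs;
         xi = replicate t m @ rs @ replicate s 1;
         n = int (t * m + sum_list rs + s) - 2 * int N;
         q = (int (sum_list rs) + int s - 2 * int N) div int m;
         \<rho> = nat ((int (sum_list rs) + int s - 2 * int N) mod int m)
     in n \<ge> 0 \<longrightarrow>
        V xi m (nat n) = fps_nth (Pf (m - \<rho> - 1) * prod_list (map Pf rs) * Pminv m q) N
      \<and> (q < 0 \<longrightarrow> V xi m (nat n) = 0)
      \<and> (q \<ge> int d \<longrightarrow> V xi m (nat n) =
            of_nat (card (tuples m ((0, m - \<rho> - 1) # map (\<lambda>r. (r, 0)) rs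
                                   @ replicate (nat q - d) (0, 0)) N)))))"
proof -
  note general = V_general_case[OF assms]
  show ?thesis
    unfolding Let_def
    apply (intro conjI allI impI)
    subgoal using general(1)[of "[]" t s N] by simp
    subgoal using general(2)[of "[]" t s N] by simp
    subgoal using general(3)[of "[]" t s N] by simp
    subgoal for r using general(1)[of "[r]" t s N] by (simp add: ac_simps)
    subgoal for r using general(2)[of "[r]" t s N] by simp
    subgoal for r using V_one_part_eq_Dnum[OF assms, of r s N t] by simp
    subgoal for r using general(3)[of "[r]" t s N] by simp
    subgoal for rs using general(1)[of rs t s N] by simp
    subgoal for rs using general(2)[of rs t s N] by simp
    subgoal for rs using general(3)[of rs t s N] by simp
    done
qed

end
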